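(* Let $G$ be a finite, simple, connected graph of order $n$ which contains a cycle. If $\beta(G)=n-g(G)+2$, then $G$ has no cut vertex (i.e., $G$ is $2$-connected).
   Context: For vertices $x,y$ of a connected graph $G$, $d(x,y)$ denotes the length of a shortest $x$–$y$ path. A set $W\subseteq V(G)$ is a resolving set for $G$ if for every two distinct vertices $u,v\in V(G)$ there exists $w\in W$ with $d(u,w)\neq d(v,w)$. The metric dimension $\beta(G)$ is the minimum cardinality of a resolving set. The girth $g(G)$ is the length of a shortest cycle of $G$. A vertex $v$ is a cut vertex if $G\setminus\{v\}$ has at least two connected components. *)

theory Defs
  imports Main
begin

definition simple_graph :: "'a set \<Rightarrow> ('a \<Rightarrow> 'a \<Rightarrow> bool) \<Rightarrow> bool" where
  "simple_graph V E \<longleftrightarrow> finite V \<and> (\<forall>x y. E x y \<longrightarrow> x \<in> V \<and> y \<in> V)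
     \<and> (\<forall>x y. E x y \<longrightarrow> E y x) \<and> (\<forall>x. \<not> E x x)"

definition walk_in :: "'a set \<Rightarrow> ('a \<Rightarrow> 'a \<Rightarrow> bool) \<Rightarrow> 'a list \<Rightarrow> bool" where
  "walk_in S E xs \<longleftrightarrow> xs \<noteq> [] \<and> set xs \<subseteq> S
     \<and> (\<forall>i. Suc i < length xs \<longrightarrow> E (xs ! i) (xs ! Suc i))"

definition reachable_in :: "'a set \<Rightarrow> ('a \<Rightarrow> 'a \<Rightarrow> bool) \<Rightarrow> 'a \<Rightarrow> 'a \<Rightarrow> bool" where
  "reachable_in S E x y \<longleftrightarrow> (\<exists>xs. walk_in S E xs \<and> hd xs = x \<and> last xs = y)"

definition connected_graph :: "'a set \<Rightarrow> ('a \<Rightarrow> 'a \<Rightarrow> bool) \<Rightarrow> bool" where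
  "connected_graph V E \<longleftrightarrow> V \<noteq> {} \<and> (\<forall>x\<in>V. \<forall>y\<in>V. reachable_in V E x y)"

definition gdist :: "'a set \<Rightarrow> ('a \<Rightarrow> 'a \<Rightarrow> bool) \<Rightarrow> 'a \<Rightarrow> 'a \<Rightarrow> nat" where
  "gdist V E x y = (LEAST n. \<exists>xs. walk_in V E xs \<and> hd xs = x \<and> last xs = y \<and> length xs = Suc n)"

definition resolving_set :: "'a set \<Rightarrow> ('a \<Rightarrow> 'a \<Rightarrow> bool) \<Rightarrow> 'a set \<Rightarrow> bool" where
  "resolving_set V E W \<longleftrightarrow> W \<subseteq> V \<and>
     (\<forall>u\<in>V. \<forall>v\<in>V. u \<noteq> v \<longrightarrow> (\<exists>w\<in>W. gdist V E u w \<noteq> gdist V E v w))"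

definition metric_dim :: "'a set \<Rightarrow> ('a \<Rightarrow> 'a \<Rightarrow> bool) \<Rightarrow> nat" where
  "metric_dim V E = (LEAST k. \<exists>W. resolving_set V E W \<and> card W = k)"

definition is_cycle :: "'a set \<Rightarrow> ('a \<Rightarrow> 'a \<Rightarrow> bool) \<Rightarrow> 'a list \<Rightarrow> bool" where
  "is_cycle V E cs \<longleftrightarrow> 3 \<le> length cs \<and> distinct cs \<and> set cs \<subseteq> V
     \<and> (\<forall>i < length cs. E (cs ! i) (cs ! ((i + 1) mod length cs)))"

definition girth :: "'a set \<Rightarrow> ('a \<Rightarrow> 'a \<Rightarrow> bool) \<Rightarrow> nat" where
  "girth V E = (LEAST k. \<exists>cs. is_cycle V E cs \<and> length cs = k)"

definition cut_vertex :: "'a set \<Rightarrow> ('a \<Rightarrow> 'a \<Rightarrow> bool) \<Rightarrow> 'a \<Rightarrow> bool" where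
  "cut_vertex V E v \<longleftrightarrow> v \<in> V \<and>
     (\<exists>x\<in>V - {v}. \<exists>y\<in>V - {v}. \<not> reachable_in (V - {v}) E x y)"

end

theory Submission
  imports Defs
begin

text \<open>
  Let \<open>C\<close> be a shortest cycle, of length \<open>g\<close>, and \<open>c\<^sub>0, c\<^sub>1\<close> two consecutive vertices
  of it. Distances in \<open>G\<close> between vertices of \<open>C\<close> equal their distances along \<open>C\<close>:
  a shorter path would, together with an arc of \<open>C\<close>, close a cycle shorter than \<open>g\<close>.
  Hence two vertices of \<open>C\<close> are distinguished by \<open>c\<^sub>0\<close> or \<open>c\<^sub>1\<close>.

  Now let \<open>v\<close> be a cut vertex and \<open>u\<close> a vertex in a component of \<open>G - v\<close> that contains no
  vertex of \<open>C - v\<close>, so that \<open>d(u, c) = d(u, v) + d(v, c)\<close> for all \<open>c \<in> C\<close>. If \<open>v\<close> lies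
  on \<open>C\<close>, say \<open>v = c\<^sub>0\<close>, then \<open>u\<close> measures distances from \<open>c\<^sub>0\<close> along \<open>C\<close>, so
  \<open>{c\<^sub>1} \<union> (V - C)\<close> is resolving. If \<open>v\<close> is off \<open>C\<close>, then \<open>u\<close> sees \<open>v\<close> strictly closer
  than every vertex of \<open>C\<close>, so \<open>{c\<^sub>0, c\<^sub>1} \<union> (V - C - {v})\<close> is resolving. Either way
  \<open>\<beta>(G) \<le> n - g + 1\<close>.
\<close>

section \<open>Distance along a cycle\<close>

definition cycle_dist :: "nat \<Rightarrow> nat \<Rightarrow> nat \<Rightarrow> nat" where
  "cycle_dist g a b = min (if a \<le> b then b - a else a - b) (g - (if a \<le> b then b - a else a - b))"

lemma cycle_dist_commute: "cycle_dist g a b = cycle_dist g b a"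
  unfolding cycle_dist_def by auto

lemma min_compl_triangle:
  fixes g :: nat
  assumes "x \<le> y + z" "y \<le> x + z" "z \<le> x + y" "x + y + z < 2 * g" "x < g" "y < g" "z < g"
  shows "min x (g - x) \<le> min y (g - y) + min z (g - z)"
  using assms
  by (cases "x \<le> g - x"; cases "y \<le> g - y"; cases "z \<le> g - z";
      simp only: min_def if_True if_False; linarith)

lemma cycle_dist_triangle:
  assumes "a < g" "b < g" "m < g"
  shows "cycle_dist g a b \<le> cycle_dist g a m + cycle_dist g m b"
proof -
  define x where "x = (if a \<le> b then b - a else a - b)"
  define y where "y = (if a \<le> m then m - a else a - m)"
  define z where "z = (if m \<le> b then b - m else m - b)"
  have "x \<le> y + z \<and> y \<le> x + z \<and> z \<le> x + y \<and> x + y + z < 2 * g \<and> x < g \<and> y < g \<and> z < g"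
    unfolding x_def y_def z_def using assms
    by (cases "a \<le> b"; cases "a \<le> m"; cases "m \<le> b"; simp only: if_True if_False; linarith)
  then show ?thesis
    unfolding cycle_dist_def x_def[symmetric] y_def[symmetric] z_def[symmetric]
    using min_compl_triangle by blast
qed

lemma cycle_dist_eq_imp_eq:
  assumes "3 \<le> g" "i < g" "j < g"
    and "cycle_dist g 0 i = cycle_dist g 0 j" "cycle_dist g 1 i = cycle_dist g 1 j"
  shows "i = j"
proof (rule ccontr)
  assume "i \<noteq> j"
  have "min i (g - i) = min j (g - j)" using assms(4) by (simp add: cycle_dist_def)
  with \<open>i \<noteq> j\<close> have sum: "i + j = g"
    using assms(2,3) by (cases "i \<le> g - i"; cases "j \<le> g - j"; simp only: min_def if_True if_False; linarith)
  then have "i \<noteq> 0" "j \<noteq> 0" using assms by auto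
  then have "min (i - 1) (g - (i - 1)) = min (j - 1) (g - (j - 1))"
    using assms(5) by (simp add: cycle_dist_def)
  moreover have "g - (i - 1) = j + 1" "g - (j - 1) = i + 1" using sum \<open>i \<noteq> 0\<close> \<open>j \<noteq> 0\<close> by auto
  ultimately have "min (i - 1) (j + 1) = min (j - 1) (i + 1)" by simp
  then show False using \<open>i \<noteq> j\<close> \<open>i \<noteq> 0\<close> \<open>j \<noteq> 0\<close>
    by (cases "i - 1 \<le> j + 1"; cases "j - 1 \<le> i + 1"; simp only: min_def if_True if_False; linarith)
qed

section \<open>Walks and cycles\<close>

lemma walk_in_singleton [simp]: "walk_in S E [x] \<longleftrightarrow> x \<in> S"
  by (simp add: walk_in_def)

lemma walk_in_Cons_Cons:
  "walk_in S E (x # y # xs) \<longleftrightarrow> x \<in> S \<and> E x y \<and> walk_in S E (y # xs)"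
  unfolding walk_in_def by (auto simp: nth_Cons split: nat.splits)

lemma walk_in_append:
  assumes "walk_in S E xs" "walk_in S E ys" "E (last xs) (hd ys)"
  shows "walk_in S E (xs @ ys)"
  using assms
proof (induction xs rule: induct_list012)
  case (2 x)
  then obtain y ys' where "ys = y # ys'" by (auto simp: walk_in_def neq_Nil_conv)
  with 2 show ?case by (simp add: walk_in_Cons_Cons)
next
  case (3 x y xs)
  then show ?case by (simp add: walk_in_Cons_Cons)
qed (simp add: walk_in_def)

lemma walk_in_take: "walk_in S E xs \<Longrightarrow> 0 < n \<Longrightarrow> walk_in S E (take n xs)"
  unfolding walk_in_def by (auto dest: in_set_takeD)

lemma walk_in_drop: "walk_in S E xs \<Longrightarrow> n < length xs \<Longrightarrow> walk_in S E (drop n xs)"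
  unfolding walk_in_def by (auto dest: in_set_dropD)

lemma walk_in_restrict: "walk_in T E xs \<Longrightarrow> set xs \<subseteq> S \<Longrightarrow> walk_in S E xs"
  unfolding walk_in_def by auto

lemma walk_in_rev:
  assumes "symp E" "walk_in S E xs"
  shows "walk_in S E (rev xs)"
  unfolding walk_in_def
proof (intro conjI allI impI)
  fix i assume i: "Suc i < length (rev xs)"
  define k where "k = length xs - Suc (Suc i)"
  have "Suc k < length xs" using i by (simp add: k_def)
  then have "E (xs ! k) (xs ! Suc k)" using assms(2) by (simp add: walk_in_def)
  moreover have "rev xs ! i = xs ! Suc k" "rev xs ! Suc i = xs ! k"
    using i by (simp_all add: rev_nth k_def Suc_diff_Suc)
  ultimately show "E (rev xs ! i) (rev xs ! Suc i)"
    using assms(1) by (metis sympD)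
qed (use assms(2) in \<open>simp_all add: walk_in_def\<close>)

lemma last_take_Suc: "i < length xs \<Longrightarrow> last (take (Suc i) xs) = xs ! i"
  by (simp add: take_Suc_conv_app_nth)

lemma walk_in_segment:
  assumes "walk_in S E xs" "i \<le> j" "j < length xs"
  shows "walk_in S E (take (Suc (j - i)) (drop i xs))"
  using assms by (intro walk_in_take walk_in_drop) auto

lemma segment_hd_last_length:
  assumes "i \<le> j" "j < length xs"
  shows "hd (take (Suc (j - i)) (drop i xs)) = xs ! i"
    and "last (take (Suc (j - i)) (drop i xs)) = xs ! j"
    and "length (take (Suc (j - i)) (drop i xs)) = Suc (j - i)"
  using assms by (simp_all add: hd_drop_conv_nth last_conv_nth)

lemma walk_in_join:
  assumes "walk_in S E xs" "walk_in S E ys" "last xs = hd ys"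
  shows "walk_in S E (xs @ tl ys)" and "hd (xs @ tl ys) = hd xs" and "last (xs @ tl ys) = last ys"
    and "length (xs @ tl ys) = length xs + length ys - 1"
proof -
  obtain y ys' where ys: "ys = y # ys'" using assms(2) by (cases ys) (auto simp: walk_in_def)
  have "xs \<noteq> []" using assms(1) by (simp add: walk_in_def)
  then show "hd (xs @ tl ys) = hd xs" by simp
  show "last (xs @ tl ys) = last ys" using assms(3) ys by (cases ys') auto
  show "length (xs @ tl ys) = length xs + length ys - 1" using ys by simp
  show "walk_in S E (xs @ tl ys)"
  proof (cases ys')
    case (Cons z zs)
    then show ?thesis using assms ys by (intro walk_in_append) (auto simp: walk_in_Cons_Cons)
  qed (use assms ys in simp)
qed

lemma reachable_in_refl: "x \<in> S \<Longrightarrow> reachable_in S E x x"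
  unfolding reachable_in_def by (intro exI[of _ "[x]"]) simp

lemma reachable_in_sym:
  assumes "symp E" "reachable_in S E x y"
  shows "reachable_in S E y x"
proof -
  obtain xs where xs: "walk_in S E xs" "hd xs = x" "last xs = y"
    using assms(2) by (auto simp: reachable_in_def)
  then have "xs \<noteq> []" by (auto simp: walk_in_def)
  with xs show ?thesis
    unfolding reachable_in_def using walk_in_rev[OF assms(1) xs(1)] by (auto simp: hd_rev last_rev)
qed

lemma reachable_in_trans:
  assumes "reachable_in S E x y" "reachable_in S E y z"
  shows "reachable_in S E x z"
proof -
  obtain xs where xs: "walk_in S E xs" "hd xs = x" "last xs = y"
    using assms(1) by (auto simp: reachable_in_def)
  obtain ys where ys: "walk_in S E ys" "hd ys = y" "last ys = z"
    using assms(2) by (auto simp: reachable_in_def)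
  show ?thesis
    unfolding reachable_in_def using walk_in_join[OF xs(1) ys(1)] xs ys by auto
qed

lemma walk_in_reachable:
  assumes "symp E" "walk_in S E ws" "a \<in> set ws" "b \<in> set ws"
  shows "reachable_in S E a b"
proof -
  have *: "reachable_in S E (ws ! i) (ws ! j)" if "i \<le> j" "j < length ws" for i j
    unfolding reachable_in_def
    using walk_in_segment[OF assms(2) that] segment_hd_last_length[OF that] by blast
  obtain i j where ij: "i < length ws" "j < length ws" and "a = ws ! i" "b = ws ! j"
    using assms(3,4) by (auto simp: in_set_conv_nth)
  moreover have "reachable_in S E (ws ! i) (ws ! j)"
  proof (cases "i \<le> j")
    case False
    then show ?thesis using *[of j i] ij reachable_in_sym[OF assms(1)] by simp
  qed (use * ij in simp)
  ultimately show ?thesis by simp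
qed

lemma gdist_le_walk:
  assumes "walk_in V E xs" "hd xs = x" "last xs = y"
  shows "gdist V E x y \<le> length xs - 1"
  unfolding gdist_def
proof (rule Least_le)
  show "\<exists>xs'. walk_in V E xs' \<and> hd xs' = x \<and> last xs' = y \<and> length xs' = Suc (length xs - 1)"
    using assms by (intro exI[of _ xs]) (auto simp: walk_in_def)
qed

lemma gdist_le_nth:
  assumes "walk_in V E xs" "i \<le> j" "j < length xs"
  shows "gdist V E (xs ! i) (xs ! j) \<le> j - i"
  using gdist_le_walk[OF walk_in_segment[OF assms]] segment_hd_last_length[OF assms(2,3)] by simp

lemma is_cycle_walk_in:
  assumes "is_cycle V E cs"
  shows "walk_in V E cs"
  unfolding walk_in_def
proof (intro conjI allI impI)
  fix i assume "Suc i < length cs"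
  then show "E (cs ! i) (cs ! Suc i)"
    using assms unfolding is_cycle_def by (metis Suc_eq_plus1 Suc_lessD mod_less)
qed (use assms in \<open>auto simp: is_cycle_def\<close>)

lemma is_cycle_of_walk_in:
  assumes "walk_in V E xs" "distinct xs" "3 \<le> length xs" "E (last xs) (hd xs)"
  shows "is_cycle V E xs"
  unfolding is_cycle_def
proof (intro conjI allI impI)
  fix i assume i: "i < length xs"
  show "E (xs ! i) (xs ! ((i + 1) mod length xs))"
  proof (cases "Suc i < length xs")
    case True
    then show ?thesis using assms(1) by (simp add: walk_in_def)
  next
    case False
    then have "Suc i = length xs" using i by simp
    then have "i = length xs - 1" "(i + 1) mod length xs = 0" "xs \<noteq> []" by auto
    with assms(4) show ?thesis by (simp add: last_conv_nth hd_conv_nth)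
  qed
qed (use assms in \<open>auto simp: walk_in_def\<close>)

lemma is_cycle_rotate:
  assumes "is_cycle V E cs"
  shows "is_cycle V E (rotate k cs)"
  unfolding is_cycle_def
proof (intro conjI allI impI)
  let ?g = "length cs"
  fix i assume "i < length (rotate k cs)"
  then have i: "i < ?g" by simp
  have "?g > 0" using assms by (auto simp: is_cycle_def)
  have "E (cs ! ((k + i) mod ?g)) (cs ! (((k + i) mod ?g + 1) mod ?g))"
    using assms \<open>?g > 0\<close> by (simp add: is_cycle_def)
  moreover have "((k + i) mod ?g + 1) mod ?g = (k + (i + 1) mod ?g) mod ?g"
    by (simp add: mod_simps add.assoc)
  ultimately show "E (rotate k cs ! i) (rotate k cs ! ((i + 1) mod length (rotate k cs)))"
    using i \<open>?g > 0\<close> by (simp add: nth_rotate)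
qed (use assms in \<open>auto simp: is_cycle_def\<close>)

lemma metric_dim_le_card: "resolving_set V E W \<Longrightarrow> metric_dim V E \<le> card W"
  unfolding metric_dim_def by (rule Least_le) blast

section \<open>Distances in a connected graph\<close>

locale connected_simple_graph =
  fixes V :: "'a set" and E :: "'a \<Rightarrow> 'a \<Rightarrow> bool"
  assumes simple: "simple_graph V E" and connected: "connected_graph V E"
begin

lemma finite_vertices: "finite V"
  using simple by (simp add: simple_graph_def)

lemma symp_edges: "symp E"
  using simple by (simp add: simple_graph_def symp_def)

lemma gdist_shortest_walk:
  assumes "x \<in> V" "y \<in> V"
  obtains xs where "walk_in V E xs" "hd xs = x" "last xs = y" "length xs = Suc (gdist V E x y)"
proof -
  obtain xs where "walk_in V E xs" "hd xs = x" "last xs = y"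
    using connected assms by (auto simp: connected_graph_def reachable_in_def)
  then have "\<exists>n xs. walk_in V E xs \<and> hd xs = x \<and> last xs = y \<and> length xs = Suc n"
    by (intro exI[of _ "length xs - 1"] exI[of _ xs]) (auto simp: walk_in_def)
  then have "\<exists>xs. walk_in V E xs \<and> hd xs = x \<and> last xs = y \<and> length xs = Suc (gdist V E x y)"
    unfolding gdist_def by (rule LeastI_ex)
  with that show ?thesis by blast
qed

lemma gdist_commute:
  assumes "x \<in> V" "y \<in> V"
  shows "gdist V E x y = gdist V E y x"
proof -
  have le: "gdist V E b a \<le> gdist V E a b" if ab: "a \<in> V" "b \<in> V" for a b
  proof -
    obtain xs where xs: "walk_in V E xs" "hd xs = a" "last xs = b" "length xs = Suc (gdist V E a b)"
      using gdist_shortest_walk[OF ab] by blast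
    then have "xs \<noteq> []" by auto
    then show ?thesis
      using gdist_le_walk[OF walk_in_rev[OF symp_edges xs(1)]] xs by (simp add: hd_rev last_rev)
  qed
  show ?thesis using le[of x y] le[of y x] assms by simp
qed

lemma gdist_triangle:
  assumes "x \<in> V" "y \<in> V" "z \<in> V"
  shows "gdist V E x z \<le> gdist V E x y + gdist V E y z"
proof -
  obtain xs where xs: "walk_in V E xs" "hd xs = x" "last xs = y" "length xs = Suc (gdist V E x y)"
    using gdist_shortest_walk assms by metis
  obtain ys where ys: "walk_in V E ys" "hd ys = y" "last ys = z" "length ys = Suc (gdist V E y z)"
    using gdist_shortest_walk assms by metis
  have "last xs = hd ys" using xs ys by simp
  from walk_in_join[OF xs(1) ys(1) this] show ?thesis
    using gdist_le_walk[of V E "xs @ tl ys"] xs ys by simp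
qed

lemma gdist_self [simp]: "x \<in> V \<Longrightarrow> gdist V E x x = 0"
  using gdist_le_walk[of V E "[x]"] by simp

lemma gdist_eq_0_iff:
  assumes "x \<in> V" "y \<in> V"
  shows "gdist V E x y = 0 \<longleftrightarrow> x = y"
proof
  assume "gdist V E x y = 0"
  moreover obtain xs where "walk_in V E xs" "hd xs = x" "last xs = y" "length xs = Suc (gdist V E x y)"
    using gdist_shortest_walk[OF assms] by blast
  ultimately obtain a where "xs = [a]" "hd xs = x" "last xs = y"
    by (metis One_nat_def length_0_conv length_Suc_conv)
  then show "x = y" by simp
qed (use assms in simp)

lemma shortest_walk_distinct:
  assumes xs: "walk_in V E xs" "hd xs = x" "last xs = y" "length xs = Suc (gdist V E x y)"
  shows "distinct xs"
proof (rule ccontr)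
  assume "\<not> distinct xs"
  then obtain i j where ij: "i < j" "j < length xs" "xs ! i = xs ! j"
    by (metis distinct_conv_nth linorder_neqE_nat)
  have w: "walk_in V E (take (Suc i) xs)" "walk_in V E (drop j xs)"
    using ij by (auto intro: walk_in_take walk_in_drop xs(1))
  have "last (take (Suc i) xs) = hd (drop j xs)"
    using ij by (simp add: last_take_Suc hd_drop_conv_nth)
  note short = walk_in_join[OF w this]
  have "hd (take (Suc i) xs) = x" "last (drop j xs) = y" using xs ij by (auto simp: hd_conv_nth)
  then have "gdist V E x y \<le> length (take (Suc i) xs @ tl (drop j xs)) - 1"
    using gdist_le_walk[OF short(1)] short(2,3) by simp
  then show False using short(4) ij xs(4) by simp
qed

lemma resolving_setI:
  assumes "W \<subseteq> V"
    and "\<And>p q. p \<in> V - W \<Longrightarrow> q \<in> V - W \<Longrightarrow> p \<noteq> q \<Longrightarrow> \<exists>w\<in>W. gdist V E p w \<noteq> gdist V E q w"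
  shows "resolving_set V E W"
  unfolding resolving_set_def
proof (intro conjI ballI impI)
  fix p q assume pq: "p \<in> V" "q \<in> V" "p \<noteq> q"
  show "\<exists>w\<in>W. gdist V E p w \<noteq> gdist V E q w"
  proof (cases "p \<in> W \<or> q \<in> W")
    case True
    then show ?thesis using pq gdist_eq_0_iff by (metis gdist_self)
  qed (use assms pq in blast)
qed (fact assms(1))

lemma cut_vertex_far_side:
  assumes "\<not> reachable_in (V - {v}) E x y" "walk_in (V - {v}) E ws"
  obtains u where "u \<in> {x, y}" "\<forall>c\<in>set ws. \<not> reachable_in (V - {v}) E u c"
proof -
  have False if "c \<in> set ws" "reachable_in (V - {v}) E x c"
    and "d \<in> set ws" "reachable_in (V - {v}) E y d" for c d
    using that assms walk_in_reachable[OF symp_edges] reachable_in_sym[OF symp_edges] reachable_in_trans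
    by metis
  with that show ?thesis by blast
qed

lemma gdist_through_cut_vertex:
  assumes "v \<in> V" "z \<in> V - {v}" "w \<in> V - {v}" "\<not> reachable_in (V - {v}) E z w"
  shows "gdist V E z w = gdist V E z v + gdist V E v w"
proof -
  obtain P where P: "walk_in V E P" "hd P = z" "last P = w" "length P = Suc (gdist V E z w)"
    using gdist_shortest_walk assms(2,3) by blast
  have "v \<in> set P"
  proof (rule ccontr)
    assume "v \<notin> set P"
    then have "walk_in (V - {v}) E P" using P(1) by (auto intro: walk_in_restrict simp: walk_in_def)
    with P(2,3) assms(4) show False by (auto simp: reachable_in_def)
  qed
  then obtain t where t: "t < length P" "P ! t = v" by (auto simp: in_set_conv_nth)
  have "P \<noteq> []" using t by auto
  then have "P ! 0 = z" "P ! (length P - 1) = w" using P(2,3) by (simp_all add: hd_conv_nth last_conv_nth)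
  then have "gdist V E z v \<le> t" "gdist V E v w \<le> length P - 1 - t"
    using gdist_le_nth[OF P(1), of 0 t] gdist_le_nth[OF P(1), of t "length P - 1"] t by auto
  moreover have "gdist V E z w \<le> gdist V E z v + gdist V E v w"
    using gdist_triangle assms by blast
  ultimately show ?thesis using P(4) t(1) by linarith
qed

end

section \<open>A shortest cycle is isometric\<close>

locale girth_cycle = connected_simple_graph +
  fixes cs :: "'a list"
  assumes cycle: "is_cycle V E cs"
    and shortest: "\<And>cs'. is_cycle V E cs' \<Longrightarrow> length cs \<le> length cs'"
begin

lemma length_ge_3: "3 \<le> length cs"
  using cycle by (simp add: is_cycle_def)

lemma distinct_cycle: "distinct cs"
  using cycle by (simp add: is_cycle_def)

lemma set_cycle_subset: "set cs \<subseteq> V"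
  using cycle by (simp add: is_cycle_def)

lemma nth_cycle_in_V: "i < length cs \<Longrightarrow> cs ! i \<in> V"
  using set_cycle_subset by auto

lemma first_edge_of_cycle: "cs ! 0 \<in> set cs" "cs ! 1 \<in> set cs" "cs ! 0 \<noteq> cs ! 1"
proof -
  have "0 < length cs" "1 < length cs" using length_ge_3 by auto
  then show "cs ! 0 \<in> set cs" "cs ! 1 \<in> set cs" "cs ! 0 \<noteq> cs ! 1"
    using distinct_cycle by (simp_all add: nth_eq_iff_index_eq)
qed

lemma gdist_cycle_le_cycle_dist:
  assumes "i < length cs" "j < length cs"
  shows "gdist V E (cs ! i) (cs ! j) \<le> cycle_dist (length cs) i j"
proof -
  have ordered: "gdist V E (cs ! i) (cs ! j) \<le> cycle_dist (length cs) i j"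
    if ij: "i \<le> j" "j < length cs" for i j
  proof -
    let ?g = "length cs"
    have "gdist V E (cs ! i) (cs ! j) \<le> j - i"
      using gdist_le_nth[OF is_cycle_walk_in[OF cycle] ij] .
    moreover have "gdist V E (cs ! j) (cs ! i) \<le> ?g - (j - i)"
    proof (cases "i = j")
      case False
      with ij have "0 < ?g" "?g - j + i < ?g" by auto
      then have "rotate j cs ! 0 = cs ! j" "rotate j cs ! (?g - j + i) = cs ! i"
        using ij by (simp_all add: nth_rotate)
      then show ?thesis
        using gdist_le_nth[OF is_cycle_walk_in[OF is_cycle_rotate[OF cycle]], of 0 "?g - j + i" j] ij False
        by simp
    qed (use ij nth_cycle_in_V in simp)
    ultimately show ?thesis
      using ij gdist_commute nth_cycle_in_V by (simp add: cycle_dist_def)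
  qed
  show ?thesis
  proof (cases "i \<le> j")
    case False
    then show ?thesis
      using ordered[of j i] assms gdist_commute nth_cycle_in_V cycle_dist_commute by simp
  qed (use ordered assms in simp)
qed

lemma cycle_dist_le_chord:
  assumes ij: "i \<le> j" "j < length cs"
    and P: "walk_in V E P" "distinct P" "hd P = cs ! i" "last P = cs ! j"
    and interior: "set (butlast (tl P)) \<inter> set cs = {}"
  shows "cycle_dist (length cs) i j \<le> length P - 1"
proof (rule ccontr)
  let ?g = "length cs" and ?n = "length P - 1"
  assume "\<not> ?thesis"
  then have short: "?n < j - i" "?n < ?g - (j - i)" using ij by (auto simp: cycle_dist_def)
  have "P \<noteq> []" using P(1) by (simp add: walk_in_def)
  have "?n \<noteq> 0"
  proof
    assume "?n = 0"
    with \<open>P \<noteq> []\<close> obtain p where "P = [p]" by (cases P) auto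
    then have "cs ! i = cs ! j" using P(3,4) by simp
    then show False using ij short distinct_cycle by (simp add: nth_eq_iff_index_eq)
  qed
  then have "tl P \<noteq> []" using \<open>P \<noteq> []\<close> by (cases P) auto
  txt \<open>The arc from \<open>cs ! i\<close> to \<open>cs ! (j - 1)\<close> followed by \<open>P\<close> backwards closes a cycle
    shorter than \<open>cs\<close>.\<close>
  define A where "A = take (j - i) (drop i cs)"
  define Q where "Q = rev (tl P)"
  have A_nth: "A ! k = cs ! (i + k)" if "k < j - i" for k
    using that ij by (simp add: A_def)
  have A: "walk_in V E A" "hd A = cs ! i" "last A = cs ! (j - 1)" "length A = j - i" "distinct A"
    using ij short A_nth[of 0] A_nth[of "j - i - 1"] is_cycle_walk_in[OF cycle] distinct_cycle
    by (auto simp: A_def hd_conv_nth last_conv_nth intro!: walk_in_take walk_in_drop)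
  have "walk_in V E (tl P)"
    using walk_in_drop[OF P(1), of 1] \<open>?n \<noteq> 0\<close> by (simp add: drop_Suc)
  moreover have "hd (tl P) = P ! 1"
    using \<open>tl P \<noteq> []\<close> by (cases P) (auto simp: hd_conv_nth)
  ultimately have Q: "walk_in V E Q" "hd Q = cs ! j" "last Q = P ! 1" "length Q = ?n" "distinct Q"
    using P \<open>tl P \<noteq> []\<close>
    by (simp_all add: Q_def last_rev hd_rev last_tl distinct_tl walk_in_rev[OF symp_edges])
  have "set Q = set (butlast (tl P) @ [last (tl P)])"
    unfolding Q_def using append_butlast_last_id[OF \<open>tl P \<noteq> []\<close>] by simp
  then have "set Q \<subseteq> set (butlast (tl P)) \<union> {cs ! j}"
    using \<open>tl P \<noteq> []\<close> P(4) by (simp add: last_tl)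
  moreover have "cs ! j \<notin> set A"
  proof
    assume "cs ! j \<in> set A"
    then obtain k where "k < j - i" "cs ! (i + k) = cs ! j"
      using A(4) A_nth by (auto simp: in_set_conv_nth)
    then show False using ij distinct_cycle by (simp add: nth_eq_iff_index_eq)
  qed
  moreover have "set A \<subseteq> set cs" by (auto simp: A_def dest: in_set_takeD in_set_dropD)
  ultimately have "set A \<inter> set Q = {}" using interior by blast
  have "Suc (j - 1) = j" using short by simp
  then have "E (cs ! (j - 1)) (cs ! j)"
    using is_cycle_walk_in[OF cycle] ij unfolding walk_in_def by metis
  then have walk: "walk_in V E (A @ Q)"
    using A Q ij short by (intro walk_in_append) auto
  have "E (P ! 0) (P ! 1)"
    using P(1) \<open>?n \<noteq> 0\<close> by (simp add: walk_in_def)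
  then have "E (P ! 1) (P ! 0)" using symp_edges by (rule sympD[rotated])
  moreover have "A \<noteq> []" "Q \<noteq> []" using A(4) Q(4) short \<open>?n \<noteq> 0\<close> by auto
  moreover have "P ! 0 = cs ! i" using P(3) \<open>P \<noteq> []\<close> by (simp add: hd_conv_nth)
  ultimately have "E (last (A @ Q)) (hd (A @ Q))" using A(2) Q(3) by simp
  then have "is_cycle V E (A @ Q)"
    using walk A Q \<open>?n \<noteq> 0\<close> \<open>set A \<inter> set Q = {}\<close> short by (intro is_cycle_of_walk_in) auto
  then have "?g \<le> length (A @ Q)" by (rule shortest)
  then show False using A(4) Q(4) short by simp
qed

lemma cycle_dist_le_path:
  assumes "i < length cs" "j < length cs"
    and "walk_in V E P" "distinct P" "hd P = cs ! i" "last P = cs ! j"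
  shows "cycle_dist (length cs) i j \<le> length P - 1"
  using assms
proof (induction "length P" arbitrary: P i j rule: less_induct)
  case less
  let ?g = "length cs" and ?n = "length P - 1"
  have "P \<noteq> []" using less.prems(3) by (simp add: walk_in_def)
  show ?case
  proof (cases "\<exists>t. 0 < t \<and> t < ?n \<and> P ! t \<in> set cs")
    case True
    then obtain t m where t: "0 < t" "t < ?n" and m: "m < ?g" "P ! t = cs ! m"
      by (metis in_set_conv_nth)
    have "hd (take (Suc t) P) = cs ! i" "last (take (Suc t) P) = cs ! m"
      using less.prems(5) m(2) t by (simp_all add: last_take_Suc)
    then have "cycle_dist ?g i m \<le> t"
      using less.hyps[of "take (Suc t) P" i m] less.prems m(1) t
      by (simp add: walk_in_take)
    moreover have "hd (drop t P) = cs ! m" "last (drop t P) = cs ! j"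
      using less.prems(6) m(2) t by (simp_all add: hd_drop_conv_nth)
    then have "cycle_dist ?g m j \<le> ?n - t"
      using less.hyps[of "drop t P" m j] less.prems m(1) t
      by (simp add: walk_in_drop)
    ultimately show ?thesis
      using cycle_dist_triangle[of i ?g j m] less.prems(1,2) m(1) t by linarith
  next
    case False
    have interior: "set (butlast (tl P)) \<inter> set cs = {}"
    proof -
      have "butlast (tl P) ! k \<notin> set cs" if "k < length (butlast (tl P))" for k
      proof -
        have "Suc k < ?n" using that by simp
        then show ?thesis using False that by (auto simp: nth_butlast nth_tl)
      qed
      then show ?thesis by (auto simp: in_set_conv_nth)
    qed
    show ?thesis
    proof (cases "i \<le> j")
      case True
      with less.prems interior show ?thesis by (intro cycle_dist_le_chord) simp_all
    next
      case False
      have "set (butlast (tl (rev P))) = set (butlast (tl P))"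
        by (metis butlast_rev butlast_tl rev_rev_ident set_rev)
      with less.prems interior False \<open>P \<noteq> []\<close>
      have "cycle_dist ?g j i \<le> length (rev P) - 1"
        by (intro cycle_dist_le_chord walk_in_rev[OF symp_edges]) (simp_all add: hd_rev last_rev)
      then show ?thesis by (simp add: cycle_dist_commute)
    qed
  qed
qed

lemma gdist_cycle_nth:
  assumes "i < length cs" "j < length cs"
  shows "gdist V E (cs ! i) (cs ! j) = cycle_dist (length cs) i j"
proof -
  obtain P where P: "walk_in V E P" "hd P = cs ! i" "last P = cs ! j"
    "length P = Suc (gdist V E (cs ! i) (cs ! j))"
    using gdist_shortest_walk nth_cycle_in_V assms by metis
  then have "cycle_dist (length cs) i j \<le> gdist V E (cs ! i) (cs ! j)"
    using cycle_dist_le_path[OF assms P(1) shortest_walk_distinct[OF P]] by simp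
  with gdist_cycle_le_cycle_dist[OF assms] show ?thesis by simp
qed

lemma cycle_vertices_resolved_by_edge:
  assumes "p \<in> set cs" "q \<in> set cs"
    and "gdist V E p (cs ! 0) = gdist V E q (cs ! 0)" "gdist V E p (cs ! 1) = gdist V E q (cs ! 1)"
  shows "p = q"
proof -
  obtain i j where ij: "i < length cs" "j < length cs" "p = cs ! i" "q = cs ! j"
    using assms(1,2) by (auto simp: in_set_conv_nth)
  have "0 < length cs" "1 < length cs" using length_ge_3 by auto
  then have "cycle_dist (length cs) 0 i = cycle_dist (length cs) 0 j"
    "cycle_dist (length cs) 1 i = cycle_dist (length cs) 1 j"
    using assms(3,4) ij gdist_cycle_nth cycle_dist_commute by metis+
  with ij length_ge_3 show ?thesis using cycle_dist_eq_imp_eq by metis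
qed

section \<open>Resolving sets in the presence of a cut vertex\<close>

lemma resolving_set_gate_on_cycle:
  assumes u: "u \<in> V - set cs"
    and gate: "\<forall>c\<in>set cs. gdist V E u c = gdist V E u (cs ! 0) + gdist V E (cs ! 0) c"
  shows "resolving_set V E (insert (cs ! 1) (V - set cs))"
proof (rule resolving_setI)
  show "insert (cs ! 1) (V - set cs) \<subseteq> V" using first_edge_of_cycle set_cycle_subset by auto
  fix p q assume "p \<in> V - insert (cs ! 1) (V - set cs)" "q \<in> V - insert (cs ! 1) (V - set cs)" "p \<noteq> q"
  then have pq: "p \<in> set cs" "q \<in> set cs" "p \<noteq> q" by auto
  show "\<exists>w\<in>insert (cs ! 1) (V - set cs). gdist V E p w \<noteq> gdist V E q w"
  proof (rule ccontr)
    assume "\<not> ?thesis"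
    then have "gdist V E p (cs ! 1) = gdist V E q (cs ! 1)" "gdist V E p u = gdist V E q u"
      using u by auto
    moreover have "gdist V E c u = gdist V E u (cs ! 0) + gdist V E c (cs ! 0)" if "c \<in> set cs" for c
    proof -
      have "c \<in> V" "cs ! 0 \<in> V" using that first_edge_of_cycle set_cycle_subset by auto
      with u have "gdist V E c u = gdist V E u c" "gdist V E c (cs ! 0) = gdist V E (cs ! 0) c"
        by (simp_all add: gdist_commute)
      with gate that show ?thesis by simp
    qed
    ultimately have "gdist V E p (cs ! 0) = gdist V E q (cs ! 0)" using pq by simp
    with pq \<open>gdist V E p (cs ! 1) = gdist V E q (cs ! 1)\<close> show False
      using cycle_vertices_resolved_by_edge by blast
  qed
qed

lemma resolving_set_gate_off_cycle:
  assumes v: "v \<in> V - set cs" and u: "u \<in> V - set cs" "u \<noteq> v"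
    and gate: "\<forall>c\<in>set cs. gdist V E u c = gdist V E u v + gdist V E v c"
  shows "resolving_set V E (insert (cs ! 0) (insert (cs ! 1) (V - set cs - {v})))"
    (is "resolving_set V E ?W")
proof (rule resolving_setI)
  show "?W \<subseteq> V" using first_edge_of_cycle set_cycle_subset by auto
  have v_vs_cycle: "\<exists>w\<in>?W. gdist V E v w \<noteq> gdist V E c w" if "c \<in> set cs" for c
  proof -
    have "c \<noteq> v" "c \<in> V" using that v set_cycle_subset by auto
    then have "gdist V E v c \<noteq> 0" using gdist_eq_0_iff v by blast
    then have "gdist V E u v \<noteq> gdist V E u c" using gate that by simp
    moreover have "u \<in> ?W" using u by simp
    ultimately show ?thesis using u v \<open>c \<in> V\<close> gdist_commute by (metis DiffD1)
  qed
  fix p q assume "p \<in> V - ?W" "q \<in> V - ?W" "p \<noteq> q"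
  then consider "p \<in> set cs" "q \<in> set cs" | "p = v" "q \<in> set cs" | "p \<in> set cs" "q = v"
    by auto
  then show "\<exists>w\<in>?W. gdist V E p w \<noteq> gdist V E q w"
  proof cases
    case 1
    then have "gdist V E p (cs ! 0) \<noteq> gdist V E q (cs ! 0) \<or> gdist V E p (cs ! 1) \<noteq> gdist V E q (cs ! 1)"
      using \<open>p \<noteq> q\<close> cycle_vertices_resolved_by_edge by blast
    then show ?thesis by blast
  next
    case 2
    then show ?thesis using v_vs_cycle by blast
  next
    case 3
    obtain w where "w \<in> ?W" "gdist V E v w \<noteq> gdist V E p w" using v_vs_cycle[OF 3(1)] by blast
    with 3 show ?thesis by (metis (no_types))
  qed
qed

lemma walk_in_cycle_minus_vertex:
  assumes "v \<notin> set (tl cs)"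
  shows "walk_in (V - {v}) E (removeAll v cs)"
proof -
  obtain c rest where cs: "cs = c # rest" using length_ge_3 by (cases cs) auto
  have "walk_in V E (c # rest)" using is_cycle_walk_in[OF cycle] cs by simp
  then have walk: "walk_in V E (removeAll v cs)"
  proof (cases "v = c")
    case True
    moreover have "rest \<noteq> []" using length_ge_3 cs by auto
    ultimately show ?thesis
      using cs assms \<open>walk_in V E (c # rest)\<close> walk_in_drop[of V E "c # rest" 1] by simp
  qed (use cs assms in simp)
  moreover have "set (removeAll v cs) \<subseteq> V - {v}" using walk by (auto simp: walk_in_def)
  ultimately show ?thesis by (rule walk_in_restrict)
qed

text \<open>The hypothesis \<open>v \<notin> set (tl cs)\<close> says that \<open>v\<close> is either the first vertex of the
  cycle or not on it at all; rotating a shortest cycle always achieves this.\<close>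

lemma metric_dim_le_if_cut_vertex:
  assumes "cut_vertex V E v" "v \<notin> set (tl cs)"
  shows "metric_dim V E \<le> card V - length cs + 1"
proof -
  obtain x y where v: "v \<in> V" and "x \<in> V - {v}" "y \<in> V - {v}"
    and not_reachable: "\<not> reachable_in (V - {v}) E x y"
    using assms(1) unfolding cut_vertex_def by blast
  obtain u where "u \<in> {x, y}" and far: "\<forall>c\<in>set (removeAll v cs). \<not> reachable_in (V - {v}) E u c"
    using cut_vertex_far_side[OF not_reachable walk_in_cycle_minus_vertex[OF assms(2)]] .
  then have u: "u \<in> V - {v}" using \<open>x \<in> V - {v}\<close> \<open>y \<in> V - {v}\<close> by blast
  then have "u \<notin> set cs" using far reachable_in_refl[of u "V - {v}"] by auto
  have gate: "\<forall>c\<in>set cs. gdist V E u c = gdist V E u v + gdist V E v c"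
  proof
    fix c assume "c \<in> set cs"
    show "gdist V E u c = gdist V E u v + gdist V E v c"
    proof (cases "c = v")
      case False
      then show ?thesis using \<open>c \<in> set cs\<close> far u v set_cycle_subset
        by (intro gdist_through_cut_vertex) auto
    qed (use v in simp)
  qed
  have fin: "finite (V - set cs)" using finite_vertices by simp
  have card_outside: "card (V - set cs) = card V - length cs"
    using card_Diff_subset[OF finite_subset[OF set_cycle_subset finite_vertices] set_cycle_subset]
      distinct_card[OF distinct_cycle] by simp
  show ?thesis
  proof (cases "v = cs ! 0")
    case True
    then have "resolving_set V E (insert (cs ! 1) (V - set cs))"
      using resolving_set_gate_on_cycle \<open>u \<notin> set cs\<close> u gate by blast
    moreover have "card (insert (cs ! 1) (V - set cs)) = card (V - set cs) + 1"
      using first_edge_of_cycle fin by simp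
    ultimately show ?thesis using metric_dim_le_card card_outside by metis
  next
    case False
    then have "v \<notin> set cs"
      using assms(2) length_ge_3 by (cases cs) (auto simp: hd_conv_nth)
    then have "resolving_set V E (insert (cs ! 0) (insert (cs ! 1) (V - set cs - {v})))"
      using resolving_set_gate_off_cycle \<open>u \<notin> set cs\<close> u v gate by blast
    moreover have "card (V - set cs - {v}) + 1 = card (V - set cs)"
      using fin v \<open>v \<notin> set cs\<close> card_Suc_Diff1[of "V - set cs" v] by simp
    then have "card (insert (cs ! 0) (insert (cs ! 1) (V - set cs - {v}))) = card (V - set cs) + 1"
      using first_edge_of_cycle fin by simp
    ultimately show ?thesis using metric_dim_le_card card_outside by metis
  qed
qed

end

lemma (in connected_simple_graph) metric_dim_le_girth_if_cut_vertex:
  assumes "\<exists>cs. is_cycle V E cs" "cut_vertex V E v"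
  shows "metric_dim V E \<le> card V - girth V E + 1"
proof -
  have "\<exists>cs. is_cycle V E cs \<and> length cs = girth V E"
    unfolding girth_def by (rule LeastI_ex) (use assms(1) in blast)
  then obtain cs0 where cs0: "is_cycle V E cs0" "length cs0 = girth V E" by blast
  have girth_le: "girth V E \<le> length cs" if "is_cycle V E cs" for cs
    unfolding girth_def by (rule Least_le) (use that in blast)
  have "0 < length cs0" using cs0(1) by (auto simp: is_cycle_def)
  then obtain k where k: "k < length cs0" "v \<in> set cs0 \<Longrightarrow> cs0 ! k = v"
    by (metis in_set_conv_nth)
  define cs where "cs = rotate k cs0"
  interpret girth_cycle V E cs
    using is_cycle_rotate[OF cs0(1)] cs0(2) girth_le by unfold_locales (simp_all add: cs_def)
  have "v \<notin> set (tl cs)"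
  proof (cases "v \<in> set cs0")
    case True
    then have "hd cs = v" using k \<open>0 < length cs0\<close> by (simp add: cs_def hd_conv_nth nth_rotate)
    then show ?thesis
      using distinct_cycle length_ge_3 by (cases cs) auto
  qed (metis cs_def list.set_sel(2) set_rotate tl_Nil)
  then show ?thesis
    using metric_dim_le_if_cut_vertex assms(2) cs0(2) by (simp add: cs_def)
qed

theorem proposition2p4:
  fixes V :: "'a set" and E :: "'a \<Rightarrow> 'a \<Rightarrow> bool"
  assumes "simple_graph V E"
    and "connected_graph V E"
    and "\<exists>cs. is_cycle V E cs"
    and "metric_dim V E = card V - girth V E + 2"
  shows "\<not> (\<exists>v. cut_vertex V E v)"
proof
  assume "\<exists>v. cut_vertex V E v"
  then obtain v where "cut_vertex V E v" ..
  interpret connected_simple_graph V E using assms(1,2) by unfold_locales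
  have "metric_dim V E \<le> card V - girth V E + 1"
    using metric_dim_le_girth_if_cut_vertex assms(3) \<open>cut_vertex V E v\<close> by blast
  with assms(4) show False by simp
qed

end
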